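(* Let $\mathcal A$ be a full adjunction implicative ordered combinatory algebra with underlying complete lattice $(A,\le)$, and let $\mathcal P_\bullet(A_\Pi)$ be computed in the associated abstract Krivine structure $\mathcal K_{\mathcal A\bullet}$ (where $\Pi=A$ and $s\perp\pi\iff s\le\pi$), ordered by $C\le C'\iff C\supseteq C'$. Define $\iota:A\to\mathcal P_\bullet(A_\Pi)$, $\iota(a)={\uparrow}a=\{x\in A:a\le x\}$, and $\rho:\mathcal P_\bullet(A_\Pi)\to A$, $\rho(C)=\inf C$. Then $\iota,\rho$ are monotone and form a Galois connection $\iota\dashv\rho$: for $a\in A$ and $C\in\mathcal P_\bullet(A_\Pi)$, $a\le\rho(C)\iff\iota(a)\supseteq C$. Moreover $\rho\circ\iota=\mathrm{id}_A$, and $\iota(\rho(C))\supseteq C$ for all $C\in\mathcal P_\bullet(A_\Pi)$.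
   Context: A full adjunction implicative ordered combinatory algebra is an inf-complete poset $(A,\le)$ with application $ab$ monotone in both arguments, implication $a\to b$ antimonotone in the first and monotone in the second argument, elements $\mathsf k,\mathsf s$ with $\mathsf k ab\le a$, $\mathsf s abc\le ac(bc)$, such that $a\le b\to c\iff ab\le c$, and a subset $\Phi\subseteq A$ closed under application containing $\mathsf s,\mathsf k$. In $\mathcal K_{\mathcal A\bullet}$, $\Lambda=\Pi=A$ and $t\perp\pi$ iff $t\le\pi$. Polars: $L^\perp=\{\pi:\forall t\in L,\ t\le\pi\}$, ${}^\perp P=\{t:\forall\pi\in P,\ t\le\pi\}$; $\overline P=({}^\perp P)^\perp$; $\widehat P=\bigcup_{\pi\in P}\overline{\{\pi\}}$; $\mathcal P_\bullet(A_\Pi)=\{P\subseteq A:\widehat P=P\}$. *)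

theory Defs
  imports Main
begin

definition full_adj_ioca ::
  "('a::complete_lattice \<Rightarrow> 'a \<Rightarrow> 'a) \<Rightarrow> ('a \<Rightarrow> 'a \<Rightarrow> 'a) \<Rightarrow> 'a \<Rightarrow> 'a \<Rightarrow> 'a set \<Rightarrow> bool"
where
  "full_adj_ioca app imp k s Phi \<longleftrightarrow>
     (\<forall>a a' b b'. a \<le> a' \<longrightarrow> b \<le> b' \<longrightarrow> app a b \<le> app a' b') \<and>
     (\<forall>a a' b b'. a' \<le> a \<longrightarrow> b \<le> b' \<longrightarrow> imp a b \<le> imp a' b') \<and>
     (\<forall>a b. app (app k a) b \<le> a) \<and>
     (\<forall>a b c. app (app (app s a) b) c \<le> app (app a c) (app b c)) \<and>
     (\<forall>a b c. a \<le> imp b c \<longleftrightarrow> app a b \<le> c) \<and>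
     (\<forall>x\<in>Phi. \<forall>y\<in>Phi. app x y \<in> Phi) \<and> s \<in> Phi \<and> k \<in> Phi"

text \<open>Polars in the abstract Krivine structure K_{A bullet}:
Lambda = Pi = A, t \<perp> pi iff t \<le> pi.\<close>

definition polar_right :: "'a::order set \<Rightarrow> 'a set" where
  "polar_right L = {\<pi>. \<forall>t\<in>L. t \<le> \<pi>}"

definition polar_left :: "'a::order set \<Rightarrow> 'a set" where
  "polar_left P = {t. \<forall>\<pi>\<in>P. t \<le> \<pi>}"

definition bclosure :: "'a::order set \<Rightarrow> 'a set" where
  "bclosure P = polar_right (polar_left P)"

definition hatclosure :: "'a::order set \<Rightarrow> 'a set" where
  "hatclosure P = (\<Union>\<pi>\<in>P. bclosure {\<pi>})"

definition Pbullet :: "'a::order set set" where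
  "Pbullet = {P. hatclosure P = P}"

definition iota :: "'a::order \<Rightarrow> 'a set" where
  "iota a = {x. a \<le> x}"

definition rho :: "'a::complete_lattice set \<Rightarrow> 'a" where
  "rho C = Inf C"

end

theory Submission
  imports Defs
begin

text \<open>With \<open>t \<perp> \<pi> \<longleftrightarrow> t \<le> \<pi>\<close>, the biorthogonal closure of a single
  pole \<open>\<pi>\<close> is its principal filter \<open>\<up>\<pi>\<close>, so \<open>\<P>\<^sub>\<bullet>(A\<^sub>\<Pi>)\<close> consists exactly
  of the upward closed subsets of \<open>A\<close>. The Galois connection is then the
  lattice fact \<open>a \<le> \<Sqinter>C \<longleftrightarrow> C \<subseteq> \<up>a\<close>.\<close>

lemma bclosure_singleton: "bclosure {p} = iota (p::'a::order)"
  unfolding bclosure_def polar_right_def polar_left_def iota_def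
  by (auto intro: order_trans)

lemma hatclosure_eq_upset: "hatclosure P = {x::'a::order. \<exists>p\<in>P. p \<le> x}"
  unfolding hatclosure_def bclosure_singleton iota_def by auto

lemma Pbullet_iff_upward_closed:
  "P \<in> Pbullet \<longleftrightarrow> (\<forall>p\<in>P. \<forall>x::'a::order. p \<le> x \<longrightarrow> x \<in> P)"
  unfolding Pbullet_def hatclosure_eq_upset by blast

lemma iota_in_Pbullet: "iota (a::'a::order) \<in> Pbullet"
  unfolding Pbullet_iff_upward_closed iota_def by (auto intro: order_trans)

lemma iota_antimono: "a \<le> b \<Longrightarrow> iota b \<subseteq> iota (a::'a::order)"
  unfolding iota_def by (auto intro: order_trans)

lemma rho_antimono: "C' \<subseteq> C \<Longrightarrow> rho C \<le> rho C'"
  unfolding rho_def by (rule Inf_superset_mono)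

lemma le_rho_iff_subset_iota: "a \<le> rho C \<longleftrightarrow> C \<subseteq> iota a"
  unfolding rho_def iota_def by (auto simp: le_Inf_iff)

lemma rho_iota: "rho (iota a) = a"
proof (rule antisym)
  show "rho (iota a) \<le> a" unfolding rho_def by (rule Inf_lower) (simp add: iota_def)
  show "a \<le> rho (iota a)" by (simp add: le_rho_iff_subset_iota)
qed

lemma subset_iota_rho: "C \<subseteq> iota (rho C)"
  using le_rho_iff_subset_iota by blast

theorem mainTheorem13:
  fixes app imp :: "'a::complete_lattice \<Rightarrow> 'a \<Rightarrow> 'a"
    and k s :: 'a and Phi :: "'a set"
  assumes "full_adj_ioca app imp k s Phi"
  shows "(\<forall>a::'a. iota a \<in> Pbullet)
    \<and> (\<forall>a b::'a. a \<le> b \<longrightarrow> iota a \<supseteq> iota b)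
    \<and> (\<forall>C\<in>(Pbullet::'a set set). \<forall>C'\<in>Pbullet. C \<supseteq> C' \<longrightarrow> rho C \<le> rho C')
    \<and> (\<forall>a::'a. \<forall>C\<in>Pbullet. a \<le> rho C \<longleftrightarrow> iota a \<supseteq> C)
    \<and> (\<forall>a::'a. rho (iota a) = a)
    \<and> (\<forall>C\<in>(Pbullet::'a set set). iota (rho C) \<supseteq> C)"
proof (intro conjI ballI allI impI)
  show "iota a \<in> Pbullet" for a :: 'a by (rule iota_in_Pbullet)
  show "iota b \<subseteq> iota a" if "a \<le> b" for a b :: 'a using that by (rule iota_antimono)
  show "rho C \<le> rho C'" if "C' \<subseteq> C" for C C' :: "'a set" using that by (rule rho_antimono)
  show "a \<le> rho C \<longleftrightarrow> C \<subseteq> iota a" for a and C :: "'a set" by (rule le_rho_iff_subset_iota)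
  show "rho (iota a) = a" for a :: 'a by (rule rho_iota)
  show "C \<subseteq> iota (rho C)" for C :: "'a set" by (rule subset_iota_rho)
qed

end
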